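(* Let $n\ge1$. For integers $1\le k\le n$ let $$S_k=\binom{n}{k}\frac{(2n-2)!}{2^{n-1}(k-1)!},$$ and let $k_0=\sqrt{n+1}-1$. Then: - $S_k\le S_{k+1}$ for every integer $k$ with $1\le k\le k_0$; - $S_k>S_{k+1}$ for every integer $k$ with $k_0<k<2k_0$; - $S_k>2S_{k+1}$ for every integer $k$ with $2k_0\le k\le n$. Here $S_{n+1}:=0$, consistent with $\binom{n}{n+1}=0$. *)

theory Defs
  imports Complex_Main
begin

text \<open>S_k = binom(n,k) (2n-2)! / (2^(n-1) (k-1)!), for k \<ge> 1. For k = n+1 the
binomial coefficient vanishes, so S n (n+1) = 0 as stipulated.\<close>
definition S :: "nat \<Rightarrow> nat \<Rightarrow> real" where
  "S n k = real (n choose k) * fact (2*n - 2) / (2 ^ (n - 1) * fact (k - 1))"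

end

theory Submission
  imports Defs
begin

text \<open>Consecutive terms satisfy k (k + 1) S n (k+1) = (n - k) S n k for every k \<ge> 1, including
  k = n where both sides vanish. So S n (k+1) / S n k = (n - k) / (k (k + 1)), which is at least 1
  iff (k + 1)^2 \<le> n + 1, i.e. iff k \<le> k0, and is below 1/2 as soon as 4 (n + 1) \<le> (k + 2)^2,
  i.e. as soon as 2 k0 \<le> k.\<close>

lemma Suc_times_binomial_Suc: "Suc k * (n choose Suc k) = (n - k) * (n choose k)"
  by (simp only: binomial_absorption binomial_absorb_comp)

lemma real_Suc_times_binomial_Suc:
  "real (Suc k) * real (n choose Suc k) = (real n - real k) * real (n choose k)"
proof (cases "k \<le> n")
  case True
  then show ?thesis
    using arg_cong[OF Suc_times_binomial_Suc[of k n], of real] by (simp add: of_nat_diff algebra_simps)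
next
  case False
  then show ?thesis by (simp add: binomial_eq_0)
qed

lemma S_pos:
  assumes "1 \<le> k" "k \<le> n"
  shows "S n k > 0"
  using assms unfolding S_def by (simp add: zero_less_binomial)

lemma S_Suc:
  assumes "1 \<le> k"
  shows "real k * (real k + 1) * S n (k + 1) = (real n - real k) * S n k"
proof -
  define A :: real where "A = fact (2 * n - 2) / 2 ^ (n - 1)"
  have S_eq: "S n j = real (n choose j) * A / fact (j - 1)" for j
    unfolding S_def A_def by simp
  have fact_k: "(fact k :: real) = real k * fact (k - 1)"
    using assms by (cases k) auto
  have "real k * (real k + 1) * S n (k + 1)
      = real (Suc k) * real (n choose Suc k) * A / fact (k - 1)"
    unfolding S_eq using assms fact_k by (simp add: field_simps)
  also have "\<dots> = (real n - real k) * S n k"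
    unfolding real_Suc_times_binomial_Suc S_eq by simp
  finally show ?thesis .
qed

lemma S_Suc_less_iff:
  assumes "1 \<le> k" "k \<le> n"
  shows "c * S n (k + 1) < S n k \<longleftrightarrow> c * (real n - real k) < real k * (real k + 1)"
proof -
  define p where "p = real k * (real k + 1)"
  have "p > 0" "S n k > 0"
    using assms S_pos unfolding p_def by auto
  have p_S_Suc: "p * S n (k + 1) = (real n - real k) * S n k"
    unfolding p_def by (rule S_Suc[OF assms(1)])
  have "c * S n (k + 1) < S n k \<longleftrightarrow> c * (p * S n (k + 1)) < p * S n k"
    using \<open>p > 0\<close> by (simp add: algebra_simps)
  also have "\<dots> \<longleftrightarrow> c * (real n - real k) * S n k < p * S n k"
    unfolding p_S_Suc by (simp only: mult.assoc)
  also have "\<dots> \<longleftrightarrow> c * (real n - real k) < p"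
    using \<open>S n k > 0\<close> by simp
  finally show ?thesis unfolding p_def .
qed

lemma S_le_S_Suc:
  assumes "1 \<le> k" "(real k + 1)\<^sup>2 \<le> real n + 1"
  shows "S n k \<le> S n (k + 1)"
proof -
  have "real k * real k + 2 * real k \<le> real n"
    using assms(2) by (simp add: power2_eq_square algebra_simps)
  then have "k \<le> n"
    by (smt (verit) of_nat_le_iff of_nat_0_le_iff zero_le_square)
  moreover have "\<not> (real n - real k < real k * (real k + 1))"
    using assms(2) by (simp add: power2_eq_square algebra_simps)
  ultimately show ?thesis
    using S_Suc_less_iff[OF assms(1), of n 1] by simp
qed

lemma S_Suc_less:
  assumes "1 \<le> k" "k \<le> n" "real n + 1 < (real k + 1)\<^sup>2"
  shows "S n (k + 1) < S n k"
  using S_Suc_less_iff[OF assms(1,2), of 1] assms(3) by (simp add: power2_eq_square algebra_simps)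

lemma S_Suc_double_less:
  assumes "1 \<le> k" "k \<le> n" "4 * (real n + 1) \<le> (real k + 2)\<^sup>2"
  shows "2 * S n (k + 1) < S n k"
proof -
  have "4 * real n \<le> real k * real k + 4 * real k"
    using assms(3) by (simp add: power2_eq_square algebra_simps)
  moreover have "real k * real k \<ge> 0" "real k \<ge> 1"
    using assms(1) by auto
  ultimately have "2 * (real n - real k) < real k * real k + real k"
    by (smt (verit))
  then show ?thesis
    using S_Suc_less_iff[OF assms(1,2)] by (simp add: distrib_left)
qed

theorem propositionA1:
  fixes n :: nat
  assumes "n \<ge> 1"
  defines "k0 \<equiv> sqrt (real n + 1) - 1"
  shows "(\<forall>k::nat. 1 \<le> k \<and> real k \<le> k0 \<longrightarrow> S n k \<le> S n (k + 1))
       \<and> (\<forall>k::nat. 1 \<le> k \<and> k \<le> n \<and> k0 < real k \<and> real k < 2 * k0 \<longrightarrow> S n k > S n (k + 1))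
       \<and> (\<forall>k::nat. 1 \<le> k \<and> 2 * k0 \<le> real k \<and> k \<le> n \<longrightarrow> S n k > 2 * S n (k + 1))"
proof (intro conjI allI impI)
  fix k :: nat
  {
    assume k: "1 \<le> k \<and> real k \<le> k0"
    then have "\<bar>real k + 1\<bar> \<le> sqrt (real n + 1)"
      unfolding k0_def by simp
    then show "S n k \<le> S n (k + 1)"
      using S_le_S_Suc k sqrt_ge_absD by blast
  }
  {
    assume k: "1 \<le> k \<and> k \<le> n \<and> k0 < real k \<and> real k < 2 * k0"
    then have "sqrt (real n + 1) < real k + 1"
      unfolding k0_def by simp
    then have "real n + 1 < (real k + 1)\<^sup>2"
      by (meson not_le real_le_rsqrt)
    then show "S n k > S n (k + 1)"
      using S_Suc_less k by blast
  }
  {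
    assume k: "1 \<le> k \<and> 2 * k0 \<le> real k \<and> k \<le> n"
    then have "sqrt (real n + 1) \<le> (real k + 2) / 2"
      unfolding k0_def by simp
    then have "4 * (real n + 1) \<le> (real k + 2)\<^sup>2"
      using sqrt_le_D by (fastforce simp: power_divide)
    then show "S n k > 2 * S n (k + 1)"
      using S_Suc_double_less k by blast
  }
qed

end
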